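(* In the deterministic flow interdiction problem (with the setting below), there exists an optimal interdiction strategy $w$ which is pure and supported on a single-path flow, i.e., $w(\mathbf{f}^* )=1$ for some single-path flow $\mathbf{f}^*\in\mathcal{F}_{\le\gamma}$.
   Context: Let $G=(V,E)$ be a simple directed acyclic graph with capacities $C\in\mathbb{R}_{\ge0}^E$, $s,t\in V$ with a directed $s$-$t$ path, and budget $\gamma$ with $0<\gamma\le\min_{e}C(e)$. An $s$-$t$ flow is $\mathbf{f}\in\mathbb{R}^E$ with $0\le\mathbf{f}(e)\le C(e)$ and flow conservation at all $v\ne s,t$; $val(\mathbf{f})=\sum_{(s,u)\in E}\mathbf{f}(s,u)$; $\mathcal{F}_{\le\gamma}$ is the set of $s$-$t$ flows with value at most $\gamma$. An interdiction strategy is a finitely supported probability distribution $w$ on $\mathcal{F}_{\le\gamma}$. A single-path flow is an $s$-$t$ flow whose positive entries lie on the edges of one $s$-$t$ path. User paths $P=\{p_1,\dots,p_k\}$ are directed paths (edge sets) with initial flow values $\lambda_i\ge0$, $\sum_{i:e\in p_i}\lambda_i\le C(e)$ for all $e$. $T(\mathbf{f},P)$ is the optimal value of: maximize $\sum_i\tilde\lambda_i$ s.t. $\sum_{i:e\in p_i}\tilde\lambda_i\le C(e)-\mathbf{f}(e)$ for all $e$, $0\le\tilde\lambda_i\le\lambda_i$; $\Lambda(\mathbf{f},P)=\sum_i\lambda_i-T(\mathbf{f},P)$, $\Lambda(w,P)=\sum_{\mathbf{f}}w(\mathbf{f})\Lambda(\mathbf{f},P)$. The deterministic flow interdiction problem: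 given $P$ and its initial values, find an interdiction strategy $w$ maximizing $\Lambda(w,P)$. *)

theory Defs
  imports Main "HOL-Library.FuncSet" Complex_Main
begin

type_synonym 'v edge = "'v \<times> 'v"

definition dipath :: "'v edge set \<Rightarrow> 'v list \<Rightarrow> bool" where
  "dipath E vs \<longleftrightarrow> vs \<noteq> [] \<and> distinct vs \<and> (\<forall>i. Suc i < length vs \<longrightarrow> (vs ! i, vs ! Suc i) \<in> E)"

definition path_edges :: "'v list \<Rightarrow> 'v edge set" where
  "path_edges vs = {(vs ! i, vs ! Suc i) | i. Suc i < length vs}"

definition st_path :: "'v edge set \<Rightarrow> 'v \<Rightarrow> 'v \<Rightarrow> 'v list \<Rightarrow> bool" where
  "st_path E s t vs \<longleftrightarrow> dipath E vs \<and> hd vs = s \<and> last vs = t"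

definition st_flow :: "'v set \<Rightarrow> 'v edge set \<Rightarrow> ('v edge \<Rightarrow> real) \<Rightarrow> 'v \<Rightarrow> 'v \<Rightarrow> ('v edge \<Rightarrow> real) \<Rightarrow> bool" where
  "st_flow V E C s t f \<longleftrightarrow>
     (\<forall>e. e \<notin> E \<longrightarrow> f e = 0) \<and>
     (\<forall>e\<in>E. 0 \<le> f e \<and> f e \<le> C e) \<and>
     (\<forall>v\<in>V - {s, t}. (\<Sum>e\<in>{e\<in>E. snd e = v}. f e) = (\<Sum>e\<in>{e\<in>E. fst e = v}. f e))"

definition flow_val :: "'v edge set \<Rightarrow> 'v \<Rightarrow> ('v edge \<Rightarrow> real) \<Rightarrow> real" where
  "flow_val E s f = (\<Sum>e\<in>{e\<in>E. fst e = s}. f e)"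

definition flows_le :: "'v set \<Rightarrow> 'v edge set \<Rightarrow> ('v edge \<Rightarrow> real) \<Rightarrow> 'v \<Rightarrow> 'v \<Rightarrow> real \<Rightarrow> ('v edge \<Rightarrow> real) set" where
  "flows_le V E C s t \<gamma> = {f. st_flow V E C s t f \<and> flow_val E s f \<le> \<gamma>}"

definition single_path_flow :: "'v set \<Rightarrow> 'v edge set \<Rightarrow> ('v edge \<Rightarrow> real) \<Rightarrow> 'v \<Rightarrow> 'v \<Rightarrow> ('v edge \<Rightarrow> real) \<Rightarrow> bool" where
  "single_path_flow V E C s t f \<longleftrightarrow> st_flow V E C s t f \<and>
     (\<exists>vs. st_path E s t vs \<and> (\<forall>e. f e > 0 \<longrightarrow> e \<in> path_edges vs))"

definition strategy :: "'v set \<Rightarrow> 'v edge set \<Rightarrow> ('v edge \<Rightarrow> real) \<Rightarrow> 'v \<Rightarrow> 'v \<Rightarrow> real \<Rightarrow> (('v edge \<Rightarrow> real) \<Rightarrow> real) \<Rightarrow> bool" where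
  "strategy V E C s t \<gamma> w \<longleftrightarrow>
     finite {f. w f \<noteq> 0} \<and> (\<forall>f. 0 \<le> w f) \<and> {f. w f \<noteq> 0} \<subseteq> flows_le V E C s t \<gamma> \<and>
     (\<Sum>f\<in>{f. w f \<noteq> 0}. w f) = 1"

text \<open>Users are indexed by i < k, with paths p i (edge sets) and initial values lam i.
  T(f,P): optimal value of the residual maximisation LP.\<close>
definition T_val :: "'v edge set \<Rightarrow> ('v edge \<Rightarrow> real) \<Rightarrow> nat \<Rightarrow> (nat \<Rightarrow> 'v edge set) \<Rightarrow> (nat \<Rightarrow> real) \<Rightarrow> ('v edge \<Rightarrow> real) \<Rightarrow> real" where
  "T_val E C k p lam f = Sup {(\<Sum>i<k. lt i) | lt.
      (\<forall>e\<in>E. (\<Sum>i\<in>{i. i < k \<and> e \<in> p i}. lt i) \<le> C e - f e) \<and>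
      (\<forall>i<k. 0 \<le> lt i \<and> lt i \<le> lam i)}"

definition Lambda_flow :: "'v edge set \<Rightarrow> ('v edge \<Rightarrow> real) \<Rightarrow> nat \<Rightarrow> (nat \<Rightarrow> 'v edge set) \<Rightarrow> (nat \<Rightarrow> real) \<Rightarrow> ('v edge \<Rightarrow> real) \<Rightarrow> real" where
  "Lambda_flow E C k p lam f = (\<Sum>i<k. lam i) - T_val E C k p lam f"

definition Lambda_strat :: "'v edge set \<Rightarrow> ('v edge \<Rightarrow> real) \<Rightarrow> nat \<Rightarrow> (nat \<Rightarrow> 'v edge set) \<Rightarrow> (nat \<Rightarrow> real) \<Rightarrow> (('v edge \<Rightarrow> real) \<Rightarrow> real) \<Rightarrow> real" where
  "Lambda_strat E C k p lam w = (\<Sum>f\<in>{f. w f \<noteq> 0}. w f * Lambda_flow E C k p lam f)"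

end

theory Submission
  imports Defs "HOL-Library.Indicator_Function"
begin

text \<open>T(f) is the optimum of a linear program whose feasible set depends affinely on f, so T
  is concave, and it never exceeds T(0) = sum of the lam i. In an acyclic network a flow of value
  v \<le> gamma decomposes along s-t paths with total weight v; this makes it a mixture of the
  single-path flows gamma times a path indicator, with weights summing to v/gamma \<le> 1, and of the
  zero flow. Concavity then bounds T(f) below by the least T of a single-path flow, so the point
  mass on a minimising single-path flow maximises Lambda = sum lam - T.\<close>

lemma dipath_mono: "dipath D vs \<Longrightarrow> D \<subseteq> E \<Longrightarrow> dipath E vs"
  unfolding dipath_def by blast

lemma dipath_nth_rtrancl:
  assumes "dipath E vs" "i \<le> j" "j < length vs"
  shows "(vs ! i, vs ! j) \<in> E\<^sup>*"
  using assms(2,3)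
proof (induction j)
  case (Suc j)
  show ?case
  proof (cases "i = Suc j")
    case False
    then have "(vs ! i, vs ! j) \<in> E\<^sup>*" using Suc by simp
    moreover have "(vs ! j, vs ! Suc j) \<in> E" using assms(1) Suc.prems(2) unfolding dipath_def by blast
    ultimately show ?thesis by (rule rtrancl_into_rtrancl)
  qed simp
qed simp

lemma dipath_hd_last_rtrancl: "dipath E vs \<Longrightarrow> (hd vs, last vs) \<in> E\<^sup>*"
  using dipath_nth_rtrancl[of E vs 0 "length vs - 1"]
  by (simp add: dipath_def hd_conv_nth last_conv_nth)

lemma dipath_Cons:
  assumes "acyclic E" "dipath E vs" "(z, hd vs) \<in> E"
  shows "dipath E (z # vs)"
proof -
  have "z \<notin> set vs"
  proof
    assume "z \<in> set vs"
    then obtain j where "j < length vs" "vs ! j = z" by (metis in_set_conv_nth)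
    then have "(hd vs, z) \<in> E\<^sup>*"
      using dipath_nth_rtrancl[OF assms(2), of 0 j] assms(2) by (simp add: dipath_def hd_conv_nth)
    then show False using assms(1,3) unfolding acyclic_def by (meson rtrancl_into_trancl2)
  qed
  with assms(2,3) show ?thesis
    unfolding dipath_def by (auto simp: nth_Cons hd_conv_nth split: nat.split)
qed

lemma dipath_snoc:
  assumes "acyclic E" "dipath E vs" "(last vs, z) \<in> E"
  shows "dipath E (vs @ [z])"
proof -
  have "z \<notin> set vs"
  proof
    assume "z \<in> set vs"
    then obtain j where "j < length vs" "vs ! j = z" by (metis in_set_conv_nth)
    then have "(z, last vs) \<in> E\<^sup>*"
      using dipath_nth_rtrancl[OF assms(2), of j "length vs - 1"] assms(2)
      by (simp add: dipath_def last_conv_nth)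
    then show False using assms(1,3) unfolding acyclic_def by (meson rtrancl_into_trancl2)
  qed
  moreover have "((vs @ [z]) ! i, (vs @ [z]) ! Suc i) \<in> E" if "Suc i < length (vs @ [z])" for i
  proof (cases "Suc i < length vs")
    case True
    with assms(2) show ?thesis by (simp add: dipath_def nth_append)
  next
    case False
    with that have "i = length vs - 1" by simp
    with assms(2,3) show ?thesis by (simp add: dipath_def nth_append last_conv_nth)
  qed
  ultimately show ?thesis using assms(2) unfolding dipath_def by simp
qed

lemma distinct_hd_neq_last: "distinct vs \<Longrightarrow> 2 \<le> length vs \<Longrightarrow> hd vs \<noteq> last vs"
  by (cases vs) (auto simp: last_conv_nth)

lemma dipath_set_subset:
  assumes "dipath E vs" "E \<subseteq> V \<times> V" "last vs \<in> V"
  shows "set vs \<subseteq> V"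
proof
  fix x assume "x \<in> set vs"
  then obtain i where i: "i < length vs" "vs ! i = x" by (metis in_set_conv_nth)
  show "x \<in> V"
  proof (cases "Suc i < length vs")
    case True
    with assms(1,2) i show ?thesis unfolding dipath_def by blast
  next
    case False
    with i have "vs \<noteq> []" "i = length vs - 1" by auto
    with i assms(3) show ?thesis by (simp add: last_conv_nth)
  qed
qed

lemma dipath_length_le_card:
  "finite V \<Longrightarrow> dipath E vs \<Longrightarrow> E \<subseteq> V \<times> V \<Longrightarrow> last vs \<in> V \<Longrightarrow> length vs \<le> card V"
  using dipath_set_subset by (metis card_mono distinct_card dipath_def)

lemma finite_st_paths:
  assumes "finite V" "E \<subseteq> V \<times> V" "t \<in> V"
  shows "finite {vs. st_path E s t vs}"
proof (rule finite_subset[OF _ finite_subset_distinct[OF assms(1)]])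
  show "{vs. st_path E s t vs} \<subseteq> {xs. set xs \<subseteq> V \<and> distinct xs}"
    using dipath_set_subset[OF _ assms(2)] assms(3) unfolding st_path_def dipath_def by blast
qed

text \<open>A longest path in D cannot be extended at either end, so both its ends lie in S.\<close>

lemma dipath_with_ends_in:
  assumes "finite V" "D \<subseteq> V \<times> V" "acyclic D" "(a, b) \<in> D"
    and forward: "\<And>x y. (x, y) \<in> D \<Longrightarrow> y \<notin> S \<Longrightarrow> \<exists>z. (y, z) \<in> D"
    and backward: "\<And>x y. (x, y) \<in> D \<Longrightarrow> x \<notin> S \<Longrightarrow> \<exists>z. (z, x) \<in> D"
  shows "\<exists>vs. dipath D vs \<and> 2 \<le> length vs \<and> hd vs \<in> S \<and> last vs \<in> S"
proof -
  let ?long = "\<lambda>vs. dipath D vs \<and> 2 \<le> length vs"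
  have last_edge: "(vs ! (length vs - 2), last vs) \<in> D" if "?long vs" for vs
  proof -
    have "Suc (length vs - 2) < length vs" "Suc (length vs - 2) = length vs - 1" "vs \<noteq> []"
      using that by auto
    with that show ?thesis unfolding dipath_def by (metis last_conv_nth)
  qed
  have "a \<noteq> b" using assms(3,4) unfolding acyclic_def by blast
  with assms(4) have "?long [a, b]" unfolding dipath_def by (auto simp: less_Suc_eq)
  moreover have "length vs < Suc (card V)" if "?long vs" for vs
    using dipath_length_le_card[OF assms(1) _ assms(2)] last_edge[OF that] that assms(2) by fastforce
  ultimately obtain vs where vs: "?long vs" and longest: "\<And>ws. ?long ws \<Longrightarrow> length ws \<le> length vs"
    using Lattices_Big.ex_has_greatest_nat[of ?long "[a, b]" length "Suc (card V)"] by blast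
  have "hd vs \<in> S"
  proof (rule ccontr)
    assume "hd vs \<notin> S"
    moreover have "(hd vs, vs ! 1) \<in> D" using vs unfolding dipath_def by (simp add: hd_conv_nth)
    ultimately obtain z where "(z, hd vs) \<in> D" using backward by blast
    then have "?long (z # vs)" using dipath_Cons[OF assms(3)] vs by auto
    with longest show False by fastforce
  qed
  moreover have "last vs \<in> S"
  proof (rule ccontr)
    assume "last vs \<notin> S"
    then obtain z where "(last vs, z) \<in> D" using forward last_edge[OF vs] by blast
    then have "?long (vs @ [z])" using dipath_snoc[OF assms(3)] vs by auto
    with longest show False by fastforce
  qed
  ultimately show ?thesis using vs by blast
qed

lemma path_edges_subset: "dipath E vs \<Longrightarrow> path_edges vs \<subseteq> E"
  unfolding path_edges_def dipath_def by blast

lemma path_edges_subset_set: "path_edges vs \<subseteq> set vs \<times> set vs"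
  unfolding path_edges_def by (auto dest: Suc_lessD)

lemma finite_path_edges: "finite (path_edges vs)"
  by (rule finite_subset[OF path_edges_subset_set]) simp

lemma card_path_edges_into:
  assumes "distinct vs" "v \<noteq> hd vs"
  shows "card {e \<in> path_edges vs. snd e = v} = of_bool (v \<in> set vs)"
proof (cases "v \<in> set vs")
  case True
  then obtain j where j: "j < length vs" "vs ! j = v" by (metis in_set_conv_nth)
  with assms(2) have "j \<noteq> 0" by (metis hd_conv_nth length_0_conv less_zeroE)
  with j assms(1) have "{e \<in> path_edges vs. snd e = v} = {(vs ! (j - 1), v)}"
    unfolding path_edges_def by (auto simp: nth_eq_iff_index_eq)
  with True show ?thesis by simp
next
  case False
  moreover from False have "{e \<in> path_edges vs. snd e = v} = {}"
    using path_edges_subset_set[of vs] by force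
  ultimately show ?thesis by (simp only: card.empty of_bool_eq(1) simp_thms)
qed

lemma card_path_edges_out_of:
  assumes "distinct vs" "v \<noteq> last vs"
  shows "card {e \<in> path_edges vs. fst e = v} = of_bool (v \<in> set vs)"
proof (cases "v \<in> set vs")
  case True
  then obtain j where j: "j < length vs" "vs ! j = v" by (metis in_set_conv_nth)
  with assms(2) have "Suc j < length vs" by (metis Suc_lessI diff_Suc_1 last_conv_nth length_0_conv less_zeroE)
  with j assms(1) have "{e \<in> path_edges vs. fst e = v} = {(v, vs ! Suc j)}"
    unfolding path_edges_def by (auto simp: nth_eq_iff_index_eq)
  with True show ?thesis by simp
next
  case False
  moreover from False have "{e \<in> path_edges vs. fst e = v} = {}"
    using path_edges_subset_set[of vs] by force
  ultimately show ?thesis by (simp only: card.empty of_bool_eq(1) simp_thms)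
qed

lemma sum_indicator_path_edges:
  assumes "path_edges q \<subseteq> E" "finite E"
  shows "(\<Sum>e\<in>{e\<in>E. P e}. indicator (path_edges q) e :: real) = card {e \<in> path_edges q. P e}"
proof -
  have "(\<Sum>e\<in>{e\<in>E. P e}. indicator (path_edges q) e :: real) = card ({e\<in>E. P e} \<inter> path_edges q)"
    unfolding indicator_def using assms(2) by simp
  also have "{e\<in>E. P e} \<inter> path_edges q = {e \<in> path_edges q. P e}" using assms(1) by blast
  finally show ?thesis .
qed

lemma st_path_props:
  assumes "st_path E s t q"
  shows "path_edges q \<subseteq> E" "distinct q" "hd q = s" "last q = t" "s \<in> set q"
  using assms path_edges_subset unfolding st_path_def dipath_def by auto

lemma path_indicator_conservation:
  assumes "st_path E s t q" "finite E" "v \<noteq> s" "v \<noteq> t"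
  shows "(\<Sum>e\<in>{e\<in>E. snd e = v}. indicator (path_edges q) e :: real)
    = (\<Sum>e\<in>{e\<in>E. fst e = v}. indicator (path_edges q) e)"
  using st_path_props[OF assms(1)] assms(2-4)
  by (simp add: sum_indicator_path_edges card_path_edges_into card_path_edges_out_of)

lemma flow_val_path_indicator:
  assumes "st_path E s t q" "finite E" "s \<noteq> t"
  shows "flow_val E s (indicator (path_edges q)) = (1 :: real)"
  using st_path_props[OF assms(1)] assms(2,3) unfolding flow_val_def
  by (simp add: sum_indicator_path_edges card_path_edges_out_of)

lemma st_flow_nonneg: "st_flow V E C s t f \<Longrightarrow> 0 \<le> f e"
  unfolding st_flow_def by (metis order_refl)

lemma st_flow_scaled_path:
  assumes "st_path E s t q" "finite E" "0 \<le> c" "\<forall>e\<in>E. c \<le> C e"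
  shows "st_flow V E C s t (\<lambda>e. c * indicator (path_edges q) e)"
  using path_indicator_conservation[OF assms(1,2)] st_path_props(1)[OF assms(1)] assms(3,4)
  unfolding st_flow_def by (auto simp: indicator_def sum_distrib_left[symmetric])

lemma single_path_flow_scaled_path:
  assumes "st_path E s t q" "finite E" "0 \<le> c" "\<forall>e\<in>E. c \<le> C e"
  shows "single_path_flow V E C s t (\<lambda>e. c * indicator (path_edges q) e)"
  using st_flow_scaled_path[OF assms] assms(1) unfolding single_path_flow_def
  by (auto simp: indicator_def)

lemma flow_val_scaled_path:
  assumes "st_path E s t q" "finite E" "s \<noteq> t"
  shows "flow_val E s (\<lambda>e. c * indicator (path_edges q) e) = c"
  using flow_val_path_indicator[OF assms] unfolding flow_val_def
  by (simp add: sum_distrib_left[symmetric])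

lemma st_flow_subtract_path:
  assumes "st_flow V E C s t f" "st_path E s t q" "finite E"
    and "0 \<le> m" "\<forall>e\<in>path_edges q. m \<le> f e"
  shows "st_flow V E C s t (\<lambda>e. f e - m * indicator (path_edges q) e)"
  using assms path_indicator_conservation[OF assms(2,3)] st_path_props(1)[OF assms(2)]
  unfolding st_flow_def
  by (auto simp: indicator_def sum_subtractf sum_distrib_left[symmetric] subset_iff)

lemma exists_pos_of_sum_eq:
  fixes g :: "'a \<Rightarrow> 'b::linordered_ab_group_add"
  assumes "finite A" "\<forall>x\<in>A. 0 \<le> g x" "a \<in> A" "0 < g a" "sum g A = sum g B"
  shows "\<exists>b\<in>B. 0 < g b"
proof (rule ccontr)
  assume "\<not> (\<exists>b\<in>B. 0 < g b)"
  then have "sum g B \<le> 0" by (intro sum_nonpos) (auto simp: not_less)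
  moreover have "g a \<le> sum g A" using sum_mono2[of A "{a}" g] assms(1-3) by auto
  ultimately show False using assms(4,5) by simp
qed

text \<open>Conservation lets a path of positive edges be extended beyond every vertex other than
  s and t; acyclicity, together with an s-t path, rules out a positive path from t to s.\<close>

lemma st_flow_positive_path:
  assumes "finite V" "E \<subseteq> V \<times> V" "acyclic E" "s \<noteq> t" "st_path E s t q\<^sub>0"
    and f: "st_flow V E C s t f" and "e\<^sub>0 \<in> E" "f e\<^sub>0 \<noteq> 0"
  shows "\<exists>q. st_path E s t q \<and> (\<forall>e\<in>path_edges q. 0 < f e)"
proof -
  define D where "D = {e\<in>E. 0 < f e}"
  have finE: "finite E" using assms(1,2) finite_subset by blast
  have "D \<subseteq> E" unfolding D_def by blast
  then have D: "D \<subseteq> V \<times> V" "acyclic D" using assms(2,3) acyclic_subset by blast+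
  have conservation: "sum f {e\<in>E. snd e = v} = sum f {e\<in>E. fst e = v}" if "v \<in> V - {s, t}" for v
    using f that unfolding st_flow_def by blast
  have nonneg: "\<forall>e\<in>A. 0 \<le> f e" for A using st_flow_nonneg[OF f] by blast
  have "(fst e\<^sub>0, snd e\<^sub>0) \<in> D" using assms(7,8) st_flow_nonneg[OF f, of e\<^sub>0] unfolding D_def by auto
  moreover have "\<exists>z. (y, z) \<in> D" if xy: "(x, y) \<in> D" "y \<notin> {s, t}" for x y
  proof -
    have "\<exists>e'\<in>{e\<in>E. fst e = y}. 0 < f e'"
    proof (rule exists_pos_of_sum_eq[of "{e\<in>E. snd e = y}" f "(x, y)"])
      show "sum f {e\<in>E. snd e = y} = sum f {e\<in>E. fst e = y}" using conservation xy D by blast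
    qed (use xy finE nonneg in \<open>auto simp: D_def\<close>)
    then show ?thesis unfolding D_def by (metis (mono_tags, lifting) mem_Collect_eq prod.collapse)
  qed
  moreover have "\<exists>z. (z, x) \<in> D" if xy: "(x, y) \<in> D" "x \<notin> {s, t}" for x y
  proof -
    have "\<exists>e'\<in>{e\<in>E. snd e = x}. 0 < f e'"
    proof (rule exists_pos_of_sum_eq[of "{e\<in>E. fst e = x}" f "(x, y)"])
      show "sum f {e\<in>E. fst e = x} = sum f {e\<in>E. snd e = x}" using conservation xy D by auto
    qed (use xy finE nonneg in \<open>auto simp: D_def\<close>)
    then show ?thesis unfolding D_def by (metis (mono_tags, lifting) mem_Collect_eq prod.collapse)
  qed
  ultimately obtain vs where vs: "dipath D vs" "2 \<le> length vs" "hd vs \<in> {s, t}" "last vs \<in> {s, t}"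
    using dipath_with_ends_in[OF assms(1) D] by metis
  have "(hd vs, last vs) \<in> E\<^sup>*"
    using dipath_hd_last_rtrancl dipath_mono[OF vs(1) \<open>D \<subseteq> E\<close>] by blast
  moreover have "(s, t) \<in> E\<^sup>+"
    using dipath_hd_last_rtrancl[of E q\<^sub>0] assms(4,5) unfolding st_path_def by (metis rtranclD)
  ultimately have "\<not> (hd vs = t \<and> last vs = s)"
    using assms(3) unfolding acyclic_def by (meson trancl_rtrancl_trancl)
  moreover have "hd vs \<noteq> last vs" using vs(1,2) distinct_hd_neq_last unfolding dipath_def by blast
  ultimately have "st_path E s t vs"
    using vs dipath_mono[OF vs(1) \<open>D \<subseteq> E\<close>] unfolding st_path_def by auto
  moreover have "\<forall>e\<in>path_edges vs. 0 < f e" using path_edges_subset[OF vs(1)] unfolding D_def by blast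
  ultimately show ?thesis by blast
qed

lemma st_path_edges_nonempty:
  assumes "st_path E s t q" "s \<noteq> t"
  shows "path_edges q \<noteq> {}"
proof -
  have "q \<noteq> []" "hd q \<noteq> last q" using assms unfolding st_path_def dipath_def by auto
  then have "Suc 0 < length q" by (cases q) auto
  then show ?thesis unfolding path_edges_def by blast
qed

lemma st_flow_subtract_bottleneck:
  assumes f: "st_flow V E C s t f" and q: "st_path E s t q" "\<forall>e\<in>path_edges q. 0 < f e"
    and "finite E" "s \<noteq> t"
  obtains m where "0 < m" "st_flow V E C s t (\<lambda>e. f e - m * indicator (path_edges q) e)"
    "card {e\<in>E. f e - m * indicator (path_edges q) e \<noteq> 0} < card {e\<in>E. f e \<noteq> 0}"
proof
  define m where "m = Min (f ` path_edges q)"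
  have "m \<in> f ` path_edges q"
    unfolding m_def using st_path_edges_nonempty[OF q(1) assms(5)] finite_path_edges by (intro Min_in) auto
  then obtain e\<^sub>m where e\<^sub>m: "e\<^sub>m \<in> path_edges q" "f e\<^sub>m = m" by blast
  then show "0 < m" using q(2) by auto
  have m_le: "\<forall>e\<in>path_edges q. m \<le> f e" unfolding m_def using finite_path_edges by (auto intro: Min_le)
  then show "st_flow V E C s t (\<lambda>e. f e - m * indicator (path_edges q) e)"
    using st_flow_subtract_path[OF f q(1) assms(4)] \<open>0 < m\<close> by simp
  let ?f' = "\<lambda>e. f e - m * indicator (path_edges q) e"
  have "{e\<in>E. ?f' e \<noteq> 0} \<subset> {e\<in>E. f e \<noteq> 0}"
  proof
    show "{e\<in>E. ?f' e \<noteq> 0} \<subseteq> {e\<in>E. f e \<noteq> 0}" using q(2) unfolding indicator_def by auto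
    have "e\<^sub>m \<in> E" using e\<^sub>m(1) st_path_props(1)[OF q(1)] by blast
    moreover have "?f' e\<^sub>m = 0" "f e\<^sub>m \<noteq> 0" using e\<^sub>m \<open>0 < m\<close> by simp_all
    ultimately show "{e\<in>E. ?f' e \<noteq> 0} \<noteq> {e\<in>E. f e \<noteq> 0}" by blast
  qed
  then show "card {e\<in>E. ?f' e \<noteq> 0} < card {e\<in>E. f e \<noteq> 0}"
    using assms(4) by (intro psubset_card_mono) auto
qed

lemma st_flow_path_decomposition:
  assumes "finite V" "E \<subseteq> V \<times> V" "acyclic E" "s \<noteq> t" "t \<in> V" "st_path E s t q\<^sub>0"
    and "st_flow V E C s t f"
  shows "\<exists>\<mu>. (\<forall>q. 0 \<le> \<mu> q) \<and>
    (\<forall>e. f e = (\<Sum>q | st_path E s t q. \<mu> q * indicator (path_edges q) e))"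
  using assms(7)
proof (induction "card {e\<in>E. f e \<noteq> 0}" arbitrary: f rule: less_induct)
  case less
  have finE: "finite E" using assms(1,2) finite_subset by blast
  show ?case
  proof (cases "\<exists>e\<in>E. f e \<noteq> 0")
    case False
    then have "\<forall>e. f e = 0" using less.prems unfolding st_flow_def by blast
    then show ?thesis by (intro exI[of _ "\<lambda>_. 0"]) simp
  next
    case True
    then obtain q where q: "st_path E s t q" "\<forall>e\<in>path_edges q. 0 < f e"
      using st_flow_positive_path[OF assms(1-4,6) less.prems] by blast
    then obtain m where "0 < m" and f': "st_flow V E C s t (\<lambda>e. f e - m * indicator (path_edges q) e)"
      and "card {e\<in>E. f e - m * indicator (path_edges q) e \<noteq> 0} < card {e\<in>E. f e \<noteq> 0}"
      using st_flow_subtract_bottleneck[OF less.prems _ _ finE assms(4)] by blast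
    then obtain \<mu> where \<mu>: "\<forall>q. 0 \<le> \<mu> q"
      "\<forall>e. f e - m * indicator (path_edges q) e = (\<Sum>q | st_path E s t q. \<mu> q * indicator (path_edges q) e)"
      using less.hyps[OF _ f'] by blast
    define \<mu>' where "\<mu>' q' = \<mu> q' + (if q' = q then m else 0)" for q'
    have "(\<Sum>q' | st_path E s t q'. \<mu>' q' * indicator (path_edges q') e)
        = (\<Sum>q' | st_path E s t q'. \<mu> q' * indicator (path_edges q') e)
          + (\<Sum>q' | st_path E s t q'. if q' = q then m * indicator (path_edges q) e else 0)" for e
      unfolding \<mu>'_def distrib_right sum.distrib by (intro arg_cong2[where f = "(+)"] sum.cong) auto
    also have "\<dots> e = f e" for e
      using sum.delta[OF finite_st_paths[OF assms(1,2,5), of s], of q "\<lambda>_. m * indicator (path_edges q) e"]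
        q(1) \<mu>(2)[rule_format, of e, symmetric] by simp
    finally have "\<forall>e. f e = (\<Sum>q' | st_path E s t q'. \<mu>' q' * indicator (path_edges q') e)" by simp
    moreover have "\<forall>q'. 0 \<le> \<mu>' q'" using \<mu>(1) \<open>0 < m\<close> unfolding \<mu>'_def by simp
    ultimately show ?thesis by blast
  qed
qed

definition residual_feasible ::
  "'v edge set \<Rightarrow> ('v edge \<Rightarrow> real) \<Rightarrow> nat \<Rightarrow> (nat \<Rightarrow> 'v edge set) \<Rightarrow> (nat \<Rightarrow> real) \<Rightarrow>
    ('v edge \<Rightarrow> real) \<Rightarrow> (nat \<Rightarrow> real) \<Rightarrow> bool" where
  "residual_feasible E C k p lam f lt \<longleftrightarrow>
    (\<forall>e\<in>E. (\<Sum>i\<in>{i. i < k \<and> e \<in> p i}. lt i) \<le> C e - f e) \<and> (\<forall>i<k. 0 \<le> lt i \<and> lt i \<le> lam i)"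

lemma T_val_eq_Sup:
  "T_val E C k p lam f = Sup {(\<Sum>i<k. lt i) | lt. residual_feasible E C k p lam f lt}"
  unfolding T_val_def residual_feasible_def by simp

lemma bdd_above_residual_values:
  "bdd_above {(\<Sum>i<k. lt i) | lt. residual_feasible E C k p lam f lt}"
  unfolding bdd_above_def residual_feasible_def
  by (intro exI[of _ "\<Sum>i<k. lam i"]) (auto intro!: sum_mono)

lemma residual_feasible_zero:
  "\<forall>i<k. 0 \<le> lam i \<Longrightarrow> \<forall>e\<in>E. f e \<le> C e \<Longrightarrow> residual_feasible E C k p lam f (\<lambda>_. 0)"
  unfolding residual_feasible_def by simp

lemma sum_le_T_val:
  "residual_feasible E C k p lam f lt \<Longrightarrow> (\<Sum>i<k. lt i) \<le> T_val E C k p lam f"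
  unfolding T_val_eq_Sup by (rule cSup_upper[OF _ bdd_above_residual_values]) blast

lemma T_val_le_sum:
  assumes "\<forall>i<k. 0 \<le> lam i" "\<forall>e\<in>E. f e \<le> C e"
  shows "T_val E C k p lam f \<le> (\<Sum>i<k. lam i)"
  unfolding T_val_eq_Sup
proof (rule cSup_least)
  show "{(\<Sum>i<k. lt i) | lt. residual_feasible E C k p lam f lt} \<noteq> {}"
    using residual_feasible_zero[OF assms] by blast
qed (auto simp: residual_feasible_def intro!: sum_mono)

lemma T_val_approx:
  assumes "\<forall>i<k. 0 \<le> lam i" "\<forall>e\<in>E. f e \<le> C e" "0 < \<epsilon>"
  shows "\<exists>lt. residual_feasible E C k p lam f lt \<and> T_val E C k p lam f - \<epsilon> < (\<Sum>i<k. lt i)"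
proof -
  have "{(\<Sum>i<k. lt i) | lt. residual_feasible E C k p lam f lt} \<noteq> {}"
    using residual_feasible_zero[OF assms(1,2)] by blast
  moreover have "T_val E C k p lam f - \<epsilon> < Sup {(\<Sum>i<k. lt i) | lt. residual_feasible E C k p lam f lt}"
    using assms(3) unfolding T_val_eq_Sup by simp
  ultimately have "\<exists>x\<in>{(\<Sum>i<k. lt i) | lt. residual_feasible E C k p lam f lt}. T_val E C k p lam f - \<epsilon> < x"
    by (rule less_cSupD)
  then show ?thesis by blast
qed

text \<open>Concavity of T. The remaining weight goes to lam itself, which is a feasible residual
  flow for the zero flow.\<close>

lemma T_val_mixture_ge:
  fixes a :: "'j \<Rightarrow> real" and g :: "'j \<Rightarrow> 'v edge \<Rightarrow> real"
  assumes "finite J" "\<forall>j\<in>J. 0 \<le> a j" "(\<Sum>j\<in>J. a j) \<le> 1"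
    and lam_nonneg: "\<forall>i<k. 0 \<le> lam i"
    and lam_le: "\<forall>e\<in>E. (\<Sum>i\<in>{i. i < k \<and> e \<in> p i}. lam i) \<le> C e"
    and g_le: "\<forall>j\<in>J. \<forall>e\<in>E. g j e \<le> C e"
  shows "(\<Sum>j\<in>J. a j * T_val E C k p lam (g j)) + (1 - (\<Sum>j\<in>J. a j)) * (\<Sum>i<k. lam i)
    \<le> T_val E C k p lam (\<lambda>e. \<Sum>j\<in>J. a j * g j e)"
proof (rule field_le_epsilon)
  fix \<epsilon> :: real
  assume "0 < \<epsilon>"
  let ?A = "\<Sum>j\<in>J. a j"
  have "\<forall>j\<in>J. \<exists>lt. residual_feasible E C k p lam (g j) lt \<and> T_val E C k p lam (g j) - \<epsilon> < (\<Sum>i<k. lt i)"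
    using T_val_approx[OF lam_nonneg _ \<open>0 < \<epsilon>\<close>] g_le by blast
  then obtain lt where lt: "\<forall>j\<in>J. residual_feasible E C k p lam (g j) (lt j) \<and>
      T_val E C k p lam (g j) - \<epsilon> < (\<Sum>i<k. lt j i)"
    by (rule bchoice[THEN exE])
  then have lt_feasible: "\<And>j. j \<in> J \<Longrightarrow> residual_feasible E C k p lam (g j) (lt j)"
    and lt_approx: "\<And>j. j \<in> J \<Longrightarrow> T_val E C k p lam (g j) - \<epsilon> < (\<Sum>i<k. lt j i)"
    by blast+
  define L where "L i = (\<Sum>j\<in>J. a j * lt j i) + (1 - ?A) * lam i" for i
  have "residual_feasible E C k p lam (\<lambda>e. \<Sum>j\<in>J. a j * g j e) L"
    unfolding residual_feasible_def
  proof (intro conjI ballI allI impI)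
    fix e assume "e \<in> E"
    let ?I = "{i. i < k \<and> e \<in> p i}"
    have "(\<Sum>i\<in>?I. L i) = (\<Sum>j\<in>J. a j * (\<Sum>i\<in>?I. lt j i)) + (1 - ?A) * (\<Sum>i\<in>?I. lam i)"
      unfolding L_def by (simp add: sum.distrib sum_distrib_left sum.swap[of _ ?I])
    also have "\<dots> \<le> (\<Sum>j\<in>J. a j * (C e - g j e)) + (1 - ?A) * C e"
      using lt_feasible assms(2,3) lam_le \<open>e \<in> E\<close> unfolding residual_feasible_def
      by (intro add_mono sum_mono mult_left_mono) auto
    also have "\<dots> = C e - (\<Sum>j\<in>J. a j * g j e)"
      by (simp add: algebra_simps sum_subtractf sum_distrib_left)
    finally show "(\<Sum>i\<in>?I. L i) \<le> C e - (\<Sum>j\<in>J. a j * g j e)" .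
  next
    fix i assume "i < k"
    then have "\<forall>j\<in>J. 0 \<le> lt j i \<and> lt j i \<le> lam i" using lt_feasible unfolding residual_feasible_def by blast
    then have "0 \<le> (\<Sum>j\<in>J. a j * lt j i)" "(\<Sum>j\<in>J. a j * lt j i) \<le> ?A * lam i"
      using assms(2) by (auto intro!: sum_nonneg sum_mono mult_left_mono simp: sum_distrib_right)
    moreover have "0 \<le> (1 - ?A) * lam i" using assms(3) lam_nonneg \<open>i < k\<close> by simp
    ultimately show "0 \<le> L i" "L i \<le> lam i" unfolding L_def by (simp_all add: algebra_simps)
  qed
  then have "(\<Sum>i<k. L i) \<le> T_val E C k p lam (\<lambda>e. \<Sum>j\<in>J. a j * g j e)" by (rule sum_le_T_val)
  moreover have "(\<Sum>i<k. L i) = (\<Sum>j\<in>J. a j * (\<Sum>i<k. lt j i)) + (1 - ?A) * (\<Sum>i<k. lam i)"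
    unfolding L_def by (simp add: sum.distrib sum_distrib_left sum.swap[of _ "{..<k}"])
  moreover have "(\<Sum>j\<in>J. a j * T_val E C k p lam (g j)) \<le> (\<Sum>j\<in>J. a j * ((\<Sum>i<k. lt j i) + \<epsilon>))"
    using lt_approx assms(2) by (intro sum_mono mult_left_mono) (auto intro: less_imp_le simp: diff_less_eq)
  moreover have "(\<Sum>j\<in>J. a j * ((\<Sum>i<k. lt j i) + \<epsilon>)) \<le> (\<Sum>j\<in>J. a j * (\<Sum>i<k. lt j i)) + \<epsilon>"
    using assms(3) \<open>0 < \<epsilon>\<close> by (simp add: distrib_left sum.distrib sum_distrib_right[symmetric] mult_left_le)
  ultimately show "(\<Sum>j\<in>J. a j * T_val E C k p lam (g j)) + (1 - ?A) * (\<Sum>i<k. lam i)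
    \<le> T_val E C k p lam (\<lambda>e. \<Sum>j\<in>J. a j * g j e) + \<epsilon>" by linarith
qed

lemma T_val_ge_path_flows:
  assumes "finite V" "E \<subseteq> V \<times> V" "acyclic E" "s \<noteq> t" "t \<in> V" "st_path E s t q\<^sub>0"
    and lam_nonneg: "\<forall>i<k. 0 \<le> lam i"
    and lam_le: "\<forall>e\<in>E. (\<Sum>i\<in>{i. i < k \<and> e \<in> p i}. lam i) \<le> C e"
    and "0 < \<gamma>" "\<forall>e\<in>E. \<gamma> \<le> C e"
    and bound: "\<And>q. st_path E s t q \<Longrightarrow> m \<le> T_val E C k p lam (\<lambda>e. \<gamma> * indicator (path_edges q) e)"
    and f: "f \<in> flows_le V E C s t \<gamma>"
  shows "m \<le> T_val E C k p lam f"
proof -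
  let ?P = "{q. st_path E s t q}"
  let ?T = "T_val E C k p lam"
  let ?g = "\<lambda>q e. \<gamma> * indicator (path_edges q) e :: real"
  have finE: "finite E" using assms(1,2) finite_subset by blast
  have finP: "finite ?P" using finite_st_paths[OF assms(1,2,5)] .
  obtain \<mu> where \<mu>: "\<forall>q. 0 \<le> \<mu> q" "\<forall>e. f e = (\<Sum>q\<in>?P. \<mu> q * indicator (path_edges q) e)"
    using st_flow_path_decomposition[OF assms(1-6)] f unfolding flows_le_def by blast
  define a where "a q = \<mu> q / \<gamma>" for q
  have f_mixture: "f = (\<lambda>e. \<Sum>q\<in>?P. a q * ?g q e)"
    using \<mu>(2) \<open>0 < \<gamma>\<close> unfolding a_def by auto
  have "flow_val E s f = (\<Sum>q\<in>?P. \<mu> q * flow_val E s (indicator (path_edges q)))"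
    unfolding flow_val_def \<mu>(2)[rule_format] by (simp add: sum.swap[of _ ?P] sum_distrib_left)
  also have "\<dots> = (\<Sum>q\<in>?P. \<mu> q)" using flow_val_path_indicator[OF _ finE assms(4)] by simp
  finally have "(\<Sum>q\<in>?P. a q) \<le> 1"
    using f \<open>0 < \<gamma>\<close> unfolding flows_le_def a_def by (simp add: sum_divide_distrib[symmetric])
  have g_le: "\<forall>e\<in>E. ?g q e \<le> C e" for q
    using assms(10) \<open>0 < \<gamma>\<close> by (auto simp: indicator_def intro: order.trans[of 0 \<gamma>])
  have "m \<le> ?T (?g q\<^sub>0)" by (rule bound[OF assms(6)])
  also have "\<dots> \<le> (\<Sum>i<k. lam i)" using T_val_le_sum[OF lam_nonneg g_le] .
  finally have "m \<le> (\<Sum>i<k. lam i)" .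
  have "m = (\<Sum>q\<in>?P. a q * m) + (1 - (\<Sum>q\<in>?P. a q)) * m"
    by (simp add: sum_distrib_left[symmetric] algebra_simps)
  also have "\<dots> \<le> (\<Sum>q\<in>?P. a q * ?T (?g q)) + (1 - (\<Sum>q\<in>?P. a q)) * (\<Sum>i<k. lam i)"
    using bound \<mu>(1) \<open>(\<Sum>q\<in>?P. a q) \<le> 1\<close> \<open>m \<le> (\<Sum>i<k. lam i)\<close> \<open>0 < \<gamma>\<close> unfolding a_def
    by (intro add_mono sum_mono mult_left_mono) auto
  also have "\<dots> \<le> ?T f"
    unfolding f_mixture
  proof (rule T_val_mixture_ge[OF finP _ \<open>(\<Sum>q\<in>?P. a q) \<le> 1\<close> lam_nonneg lam_le])
    show "\<forall>q\<in>?P. 0 \<le> a q" using \<mu>(1) \<open>0 < \<gamma>\<close> unfolding a_def by simp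
    show "\<forall>q\<in>?P. \<forall>e\<in>E. ?g q e \<le> C e" using g_le by blast
  qed
  finally show ?thesis .
qed

lemma strategy_point_mass:
  "f \<in> flows_le V E C s t \<gamma> \<Longrightarrow> strategy V E C s t \<gamma> (\<lambda>h. of_bool (h = f))"
  unfolding strategy_def by simp

lemma Lambda_strat_point_mass:
  "Lambda_strat E C k p lam (\<lambda>h. of_bool (h = f)) = Lambda_flow E C k p lam f"
  unfolding Lambda_strat_def by simp

lemma Lambda_strat_le:
  assumes "strategy V E C s t \<gamma> w" "\<forall>f\<in>flows_le V E C s t \<gamma>. Lambda_flow E C k p lam f \<le> M"
  shows "Lambda_strat E C k p lam w \<le> M"
proof -
  let ?S = "{f. w f \<noteq> 0}"
  have "Lambda_strat E C k p lam w \<le> (\<Sum>f\<in>?S. w f * M)"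
    unfolding Lambda_strat_def using assms unfolding strategy_def
    by (intro sum_mono mult_left_mono) auto
  also have "\<dots> = M" using assms(1) unfolding strategy_def by (simp add: sum_distrib_right[symmetric])
  finally show ?thesis .
qed

theorem proposition2:
  fixes V :: "'v set" and E :: "'v edge set" and C :: "'v edge \<Rightarrow> real"
    and s t :: 'v and \<gamma> :: real
    and k :: nat and p :: "nat \<Rightarrow> 'v edge set" and lam :: "nat \<Rightarrow> real"
  assumes "finite V" and "E \<subseteq> V \<times> V" and "acyclic E"
    and "s \<in> V" and "t \<in> V" and "s \<noteq> t"
    and "\<exists>vs. st_path E s t vs"
    and "\<forall>e\<in>E. 0 \<le> C e"
    and "0 < \<gamma>" and "\<forall>e\<in>E. \<gamma> \<le> C e"
    and "\<forall>i<k. \<exists>vs. dipath E vs \<and> p i = path_edges vs"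
    and "\<forall>i<k. 0 \<le> lam i"
    and "\<forall>e\<in>E. (\<Sum>i\<in>{i. i < k \<and> e \<in> p i}. lam i) \<le> C e"
  shows "\<exists>w. strategy V E C s t \<gamma> w \<and>
           (\<forall>w'. strategy V E C s t \<gamma> w' \<longrightarrow> Lambda_strat E C k p lam w' \<le> Lambda_strat E C k p lam w) \<and>
           (\<exists>f. f \<in> flows_le V E C s t \<gamma> \<and> single_path_flow V E C s t f \<and> w f = 1)"
proof -
  let ?T = "T_val E C k p lam"
  let ?g = "\<lambda>q e. \<gamma> * indicator (path_edges q) e :: real"
  have finE: "finite E" using assms(1,2) finite_subset by blast
  obtain q\<^sub>0 where q\<^sub>0: "st_path E s t q\<^sub>0"
    and q\<^sub>0_min: "\<And>q. st_path E s t q \<Longrightarrow> ?T (?g q\<^sub>0) \<le> ?T (?g q)"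
    using ex_is_arg_min_if_finite[OF finite_st_paths[OF assms(1,2,5), of s], of "\<lambda>q. ?T (?g q)"] assms(7)
    unfolding is_arg_min_def by (metis empty_Collect_eq mem_Collect_eq not_le)
  have f\<^sub>0: "?g q\<^sub>0 \<in> flows_le V E C s t \<gamma>" "single_path_flow V E C s t (?g q\<^sub>0)"
    using st_flow_scaled_path[OF q\<^sub>0 finE] single_path_flow_scaled_path[OF q\<^sub>0 finE]
      flow_val_scaled_path[OF q\<^sub>0 finE assms(6)] assms(9,10)
    unfolding flows_le_def by auto
  have max: "\<forall>f\<in>flows_le V E C s t \<gamma>. Lambda_flow E C k p lam f \<le> Lambda_flow E C k p lam (?g q\<^sub>0)"
    using T_val_ge_path_flows[OF assms(1-3,6,5) q\<^sub>0 assms(12,13,9,10) q\<^sub>0_min]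
    unfolding Lambda_flow_def by auto
  define w where "w = (\<lambda>h. of_bool (h = ?g q\<^sub>0) :: real)"
  have "Lambda_strat E C k p lam w' \<le> Lambda_strat E C k p lam w" if "strategy V E C s t \<gamma> w'" for w'
    unfolding w_def Lambda_strat_point_mass using Lambda_strat_le[OF that max] .
  then show ?thesis using strategy_point_mass[OF f\<^sub>0(1)] f\<^sub>0 unfolding w_def by auto
qed

end
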